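(* Let $\mathcal{H}=\mathbb{R}^3$ with points written $(\mathbf{x},y)$, $\mathbf{x}=(x_1,x_2)\in\mathbb{R}^2$, $y\in\mathbb{R}$, be the Heisenberg group with product $(\mathbf{x},y)\cdot(\mathbf{a},b)=(\mathbf{x}+\mathbf{a},\,y+b+x_1a_2)$, let $\Gamma=\{(\mathbf{x},y):\mathbf{x}\in\mathbb{Z}^2,\ y\in\tfrac12\mathbb{Z}\}$ and $N=\mathcal{H}/\Gamma$ with projection $\pi$. Let $\Phi(\mathbf{x},y)=(B\mathbf{x},\,y+x_1^2+\tfrac12x_2^2+x_1x_2)$ with $B=\begin{pmatrix}2&1\\1&1\end{pmatrix}$, and let $f\colon N\to N$ be the diffeomorphism with $f\circ\pi=\pi\circ\Phi$. Then $f$ is partially hyperbolic with splitting $TN=E^s\oplus E^c\oplus E^u$, and the bundle $E^{cu}=E^c\oplus E^u$ is trivial, with global frame given (in the fundamental domain $\{0\le x_1,x_2\le1,\ 0\le y\le\tfrac12\}$) by $v_1=(\mathbf{0},1)$ and $v_2=(\mathbf{v}^u_B,x_2q_1)$, where $\mathbf{v}^u_B=(q_1,q_2)$ is an eigenvector of $B$ for its eigenvalue $>1$. For $\theta\in\mathbb{R}$ define the cocycle $F_\theta\colon TN\to TN$ over $f$ by $F_\theta(p,v)=(f(p),Df(p)R_\theta v)$ for $v\in E^{cu}(p)$ and $F_\theta(p,v)=(f(p),Df(p)v)$ for $v\in E^s(p)$, where $R_\theta$ acts on each fiber of $E^{cu}$ as the rotation by angle $\theta$ in the coordinates of the frame $(v_2,v_1)$.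 Then there is a non-empty open set $\mathcal{I}\subseteq[0,2\pi]$ such that for every $\theta\in\mathcal{I}$ the cocycle $F_\theta$ is partially hyperbolic with an invariant splitting $TN=E^s_\theta\oplus E^c_\theta\oplus E^u_\theta$, and $F_\theta$ is non-uniformly hyperbolic (all its Lyapunov exponents with respect to the Lebesgue (Haar) measure on $N$ are non-zero).
   Context: The Lebesgue measure on $N$ is $f$-invariant and ergodic. The derivative cocycle $F=F_0$, $F(p,v)=(f(p),Df(p)v)$, has Lyapunov exponents $-\lambda^u=\lambda^s<\lambda^c=0<\lambda^u$. A cocycle on $TN$ over $f$ is called partially hyperbolic with splitting $E^s\oplus E^c\oplus E^u$ if this is a continuous invariant splitting into line bundles with $E^s$ uniformly contracted, $E^u$ uniformly expanded, and each bundle dominated by the next one. *)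

theory Defs
  imports "HOL-Analysis.Analysis"
begin

text \<open>The Heisenberg group is modelled as real^3 with coordinates (x1,x2,y) = (p$1,p$2,p$3).
  The nilmanifold N = H/Gamma (right cosets) is modelled through its universal cover:
  objects on N are Gamma-equivariant objects on H. Tangent vectors at p are vectors of real^3
  (standard coordinates); the Riemannian metric on N is the right-invariant metric on H.\<close>

definition mk3 :: "real \<Rightarrow> real \<Rightarrow> real \<Rightarrow> real^3" where
  "mk3 a b c = (\<chi> i. if i = 1 then a else if i = 2 then b else c)"

definition hmul :: "real^3 \<Rightarrow> real^3 \<Rightarrow> real^3" where
  "hmul p q = mk3 (p$1 + q$1) (p$2 + q$2) (p$3 + q$3 + p$1 * q$2)"

definition hinv :: "real^3 \<Rightarrow> real^3" where
  "hinv p = mk3 (- p$1) (- p$2) (- p$3 + p$1 * p$2)"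

definition Gam :: "(real^3) set" where
  "Gam = {g. g$1 \<in> \<int> \<and> g$2 \<in> \<int> \<and> 2 * g$3 \<in> \<int>}"

text \<open>Derivative at p of the right translation by g (the covering identifications act by these).\<close>
definition DRt :: "real^3 \<Rightarrow> real^3 \<Rightarrow> real^3 \<Rightarrow> real^3" where
  "DRt g p = frechet_derivative (\<lambda>q. hmul q g) (at p)"

definition hnorm :: "real^3 \<Rightarrow> real^3 \<Rightarrow> real" where
  "hnorm p v = norm (DRt (hinv p) p v)"

definition Bmat :: "real^2^2" where
  "Bmat = (\<chi> i j. if i = 1 \<and> j = 1 then 2 else 1)"

definition Phi :: "real^3 \<Rightarrow> real^3" where
  "Phi p = mk3 (2 * p$1 + p$2) (p$1 + p$2) (p$3 + (p$1)^2 + (p$2)^2 / 2 + p$1 * p$2)"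

definition Df :: "real^3 \<Rightarrow> real^3 \<Rightarrow> real^3" where
  "Df p = frechet_derivative Phi (at p)"

fun cocn :: "('a \<Rightarrow> 'a) \<Rightarrow> ('a \<Rightarrow> 'b \<Rightarrow> 'b) \<Rightarrow> nat \<Rightarrow> 'a \<Rightarrow> 'b \<Rightarrow> 'b" where
  "cocn g M 0 p = id"
| "cocn g M (Suc n) p = M ((g ^^ n) p) \<circ> cocn g M n p"

definition cont_line_bundle :: "(real^3 \<Rightarrow> (real^3) set) \<Rightarrow> bool" where
  "cont_line_bundle E \<longleftrightarrow> (\<forall>p. \<exists>U X. open U \<and> p \<in> U \<and> continuous_on U X \<and>
      (\<forall>x\<in>U. X x \<noteq> 0 \<and> E x = span {X x}))"

definition gam_equivariant :: "(real^3 \<Rightarrow> (real^3) set) \<Rightarrow> bool" where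
  "gam_equivariant E \<longleftrightarrow> (\<forall>p g. g \<in> Gam \<longrightarrow> E (hmul p g) = DRt g p ` E p)"

definition invariant_bundle :: "(real^3 \<Rightarrow> real^3) \<Rightarrow> (real^3 \<Rightarrow> real^3 \<Rightarrow> real^3)
    \<Rightarrow> (real^3 \<Rightarrow> (real^3) set) \<Rightarrow> bool" where
  "invariant_bundle g M E \<longleftrightarrow> (\<forall>p. M p ` E p = E (g p))"

definition unif_contracted :: "(real^3 \<Rightarrow> real^3) \<Rightarrow> (real^3 \<Rightarrow> real^3 \<Rightarrow> real^3)
    \<Rightarrow> (real^3 \<Rightarrow> (real^3) set) \<Rightarrow> bool" where
  "unif_contracted g M E \<longleftrightarrow> (\<exists>C lam. C > 0 \<and> 0 < lam \<and> lam < 1 \<and>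
     (\<forall>p n v. v \<in> E p \<longrightarrow> hnorm ((g ^^ n) p) (cocn g M n p v) \<le> C * lam ^ n * hnorm p v))"

definition unif_expanded :: "(real^3 \<Rightarrow> real^3) \<Rightarrow> (real^3 \<Rightarrow> real^3 \<Rightarrow> real^3)
    \<Rightarrow> (real^3 \<Rightarrow> (real^3) set) \<Rightarrow> bool" where
  "unif_expanded g M E \<longleftrightarrow> (\<exists>C lam. C > 0 \<and> lam > 1 \<and>
     (\<forall>p n v. v \<in> E p \<longrightarrow> hnorm ((g ^^ n) p) (cocn g M n p v) \<ge> C * lam ^ n * hnorm p v))"

definition dominated :: "(real^3 \<Rightarrow> real^3) \<Rightarrow> (real^3 \<Rightarrow> real^3 \<Rightarrow> real^3)
    \<Rightarrow> (real^3 \<Rightarrow> (real^3) set) \<Rightarrow> (real^3 \<Rightarrow> (real^3) set) \<Rightarrow> bool" where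
  "dominated g M E E' \<longleftrightarrow> (\<exists>C lam. C > 0 \<and> 0 < lam \<and> lam < 1 \<and>
     (\<forall>p n u w. u \<in> E p \<longrightarrow> w \<in> E' p \<longrightarrow>
        hnorm ((g ^^ n) p) (cocn g M n p u) * hnorm p w
          \<le> C * lam ^ n * hnorm ((g ^^ n) p) (cocn g M n p w) * hnorm p u))"

definition partially_hyperbolic :: "(real^3 \<Rightarrow> real^3) \<Rightarrow> (real^3 \<Rightarrow> real^3 \<Rightarrow> real^3)
    \<Rightarrow> (real^3 \<Rightarrow> (real^3) set) \<Rightarrow> (real^3 \<Rightarrow> (real^3) set) \<Rightarrow> (real^3 \<Rightarrow> (real^3) set) \<Rightarrow> bool" where
  "partially_hyperbolic g M Es Ec Eu \<longleftrightarrow>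
     cont_line_bundle Es \<and> cont_line_bundle Ec \<and> cont_line_bundle Eu \<and>
     gam_equivariant Es \<and> gam_equivariant Ec \<and> gam_equivariant Eu \<and>
     invariant_bundle g M Es \<and> invariant_bundle g M Ec \<and> invariant_bundle g M Eu \<and>
     (\<forall>p. span (Es p \<union> Ec p \<union> Eu p) = UNIV) \<and>
     unif_contracted g M Es \<and> unif_expanded g M Eu \<and>
     dominated g M Es Ec \<and> dominated g M Ec Eu"

definition nonuniformly_hyperbolic :: "(real^3 \<Rightarrow> real^3) \<Rightarrow> (real^3 \<Rightarrow> real^3 \<Rightarrow> real^3) \<Rightarrow> bool" where
  "nonuniformly_hyperbolic g M \<longleftrightarrow>
     (AE p in lborel. \<forall>v. v \<noteq> 0 \<longrightarrow> (\<exists>L. L \<noteq> 0 \<and>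
        ((\<lambda>n. ln (hnorm ((g ^^ n) p) (cocn g M n p v)) / real n) \<longlongrightarrow> L) sequentially))"

definition v1 :: "real^3 \<Rightarrow> real^3" where "v1 p = mk3 0 0 1"
definition v2 :: "real^2 \<Rightarrow> real^3 \<Rightarrow> real^3" where "v2 q p = mk3 (q$1) (q$2) (p$2 * q$1)"
definition es :: "real^2 \<Rightarrow> real^3 \<Rightarrow> real^3" where "es s p = mk3 (s$1) (s$2) (p$2 * s$1)"

definition Rot :: "real \<Rightarrow> real^2 \<Rightarrow> real^2 \<Rightarrow> real^3 \<Rightarrow> real^3 \<Rightarrow> real^3" where
  "Rot \<theta> q s p = (SOME L. linear L \<and> L (es s p) = es s p \<and>
      L (v2 q p) = cos \<theta> *\<^sub>R v2 q p + sin \<theta> *\<^sub>R v1 p \<and>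
      L (v1 p) = (- sin \<theta>) *\<^sub>R v2 q p + cos \<theta> *\<^sub>R v1 p)"

definition Ftheta :: "real \<Rightarrow> real^2 \<Rightarrow> real^2 \<Rightarrow> real^3 \<Rightarrow> real^3 \<Rightarrow> real^3" where
  "Ftheta \<theta> q s p = Df p \<circ> Rot \<theta> q s p"

end

theory Submission
  imports Defs
begin

(* Right-translating tangent vectors to the identity turns hnorm into the Euclidean norm,
   and in this frame Df and F_theta become constant linear maps: diag(B,1) and diag(B,1) R_theta.
   The eigenlines of such a map, translated back, are invariant bundles along which the cocycle
   scales norms by exactly |eigenvalue|^n, so three eigenvalues of distinct moduli give
   partial hyperbolicity, and every orbit grows at the rate ln|eigenvalue| of one of them.
   On span{(q,0),(0,1)} the rotated map has trace (1+mu) cos theta and determinant mu, so for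
   small theta > 0 both its eigenvalues are real and larger than 1; together with the
   eigenvalue nu < 1 of B no exponent vanishes. *)

lemma mk3_nth [simp]: "mk3 a b c $ 1 = a" "mk3 a b c $ 2 = b" "mk3 a b c $ 3 = c"
  by (simp_all add: mk3_def)

lemma vec3_eqI: "x$1 = y$1 \<Longrightarrow> x$2 = y$2 \<Longrightarrow> x$3 = (y::real^3)$3 \<Longrightarrow> x = y"
  by (simp add: vec_eq_iff forall_3)

lemma mk3_eq_axis_sum: "mk3 a b c = a *\<^sub>R axis 1 1 + b *\<^sub>R axis 2 1 + c *\<^sub>R axis 3 1"
  by (rule vec3_eqI) (simp_all add: axis_def)

lemma has_derivative_vec_nth [derivative_intros]:
  "((\<lambda>x::real^3. x $ i) has_derivative (\<lambda>v. v $ i)) F"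
  by (rule bounded_linear_imp_has_derivative) (rule bounded_linear_vec_nth)

lemma DRt_eq: "DRt g p = (\<lambda>v. mk3 (v$1) (v$2) (v$3 + v$1 * g$2))"
proof -
  have "((\<lambda>q. hmul q g) has_derivative (\<lambda>v. mk3 (v$1) (v$2) (v$3 + v$1 * g$2))) (at p)"
    unfolding hmul_def mk3_eq_axis_sum
    by (rule has_derivative_eq_rhs, (rule derivative_eq_intros | simp)+)
  then show ?thesis
    unfolding DRt_def by (rule frechet_derivative_at[symmetric])
qed

lemma linear_DRt: "linear (DRt g p)"
  unfolding DRt_eq by (rule linearI; rule vec3_eqI; simp add: algebra_simps)

lemma Df_eq: "Df p = (\<lambda>v. mk3 (2 * v$1 + v$2) (v$1 + v$2)
   (v$3 + 2 * p$1 * v$1 + p$2 * v$2 + p$1 * v$2 + p$2 * v$1))"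
proof -
  have "(Phi has_derivative (\<lambda>v. mk3 (2 * v$1 + v$2) (v$1 + v$2)
     (v$3 + 2 * p$1 * v$1 + p$2 * v$2 + p$1 * v$2 + p$2 * v$1))) (at p)"
    unfolding Phi_def[abs_def] mk3_eq_axis_sum
    by (rule has_derivative_eq_rhs, (rule derivative_eq_intros | simp)+)
       (simp add: fun_eq_iff algebra_simps)
  then show ?thesis
    unfolding Df_def by (rule frechet_derivative_at[symmetric])
qed

section \<open>The right-invariant frame\<close>

text \<open>\<open>to_id p\<close> is the derivative at \<open>p\<close> of right translation by \<open>p\<inverse>\<close>.\<close>

definition to_id :: "real^3 \<Rightarrow> real^3 \<Rightarrow> real^3" where
  "to_id p v = mk3 (v$1) (v$2) (v$3 - v$1 * p$2)"

definition from_id :: "real^3 \<Rightarrow> real^3 \<Rightarrow> real^3" where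
  "from_id p v = mk3 (v$1) (v$2) (v$3 + v$1 * p$2)"

lemma hnorm_eq_norm_to_id: "hnorm p v = norm (to_id p v)"
  unfolding hnorm_def DRt_eq to_id_def hinv_def by simp

lemma to_id_from_id [simp]: "to_id p (from_id p v) = v"
  and from_id_to_id [simp]: "from_id p (to_id p v) = v"
  by (rule vec3_eqI; simp add: to_id_def from_id_def)+

lemma linear_to_id: "linear (to_id p)" and linear_from_id: "linear (from_id p)"
  by (rule linearI; rule vec3_eqI; simp add: to_id_def from_id_def algebra_simps)+

lemma from_id_eq_0_iff [simp]: "from_id p v = 0 \<longleftrightarrow> v = 0"
  by (metis to_id_from_id linear_0[OF linear_to_id] linear_0[OF linear_from_id])

lemma DRt_from_id: "DRt g p (from_id p v) = from_id (hmul p g) v"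
  by (rule vec3_eqI) (simp_all add: DRt_eq from_id_def hmul_def algebra_simps)

definition lift2 :: "real^2 \<Rightarrow> real^3" where
  "lift2 x = mk3 (x$1) (x$2) 0"

definition Bext :: "real^3 \<Rightarrow> real^3" where
  "Bext v = mk3 (2 * v$1 + v$2) (v$1 + v$2) (v$3)"

lemma linear_Bext: "linear Bext"
  by (rule linearI; rule vec3_eqI; simp add: Bext_def algebra_simps)

lemma Df_eq_conj: "Df p = from_id (Phi p) \<circ> Bext \<circ> to_id p"
  by (rule ext, rule vec3_eqI)
     (simp_all add: Df_eq from_id_def Bext_def to_id_def Phi_def algebra_simps)

lemma es_eq: "es s p = from_id p (lift2 s)"
  and v2_eq: "v2 q p = from_id p (lift2 q)"
  and v1_eq: "v1 p = from_id p (axis 3 1)"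
  by (rule vec3_eqI; simp add: es_def v2_def v1_def from_id_def lift2_def axis_def)+

lemma lift2_eq_0_iff [simp]: "lift2 x = 0 \<longleftrightarrow> x = 0"
  by (auto simp: lift2_def vec_eq_iff forall_2 forall_3)

lemma Bmat_mult_nth: "(Bmat *v x)$1 = 2 * x$1 + x$2" "(Bmat *v x)$2 = x$1 + x$2"
  by (simp_all add: matrix_vector_mult_def Bmat_def sum_2)

lemma Bext_lift2: "Bmat *v x = c *s x \<Longrightarrow> Bext (lift2 x) = c *\<^sub>R lift2 x"
  by (rule vec3_eqI) (simp_all add: Bext_def lift2_def flip: Bmat_mult_nth)

lemma Bext_axis3: "Bext (axis 3 1) = axis 3 1"
  by (rule vec3_eqI) (simp_all add: Bext_def axis_def)

lemma Bmat_eigenvalue: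
  assumes "x \<noteq> 0" "Bmat *v x = c *s x"
  shows "(c - 1) * (c - 2) = 1"
proof -
  have h1: "x$2 = (c - 2) * x$1" and h2: "x$1 = (c - 1) * x$2"
    using arg_cong[OF assms(2), of "\<lambda>v. v$1"] arg_cong[OF assms(2), of "\<lambda>v. v$2"]
    by (simp_all add: Bmat_mult_nth algebra_simps)
  have "x$1 \<noteq> 0"
    using assms(1) h1 by (auto simp: vec_eq_iff forall_2)
  moreover have "x$1 = (c - 1) * (c - 2) * x$1"
    using h1 h2 by (metis mult.assoc)
  ultimately show ?thesis
    by (metis mult_cancel_right1)
qed

lemma Bmat_eigenvalue_pos:
  assumes "x \<noteq> 0" "Bmat *v x = c *s x"
  shows "c > 0"
proof (rule ccontr)
  assume "\<not> c > 0"
  then have "1 * 2 \<le> (1 - c) * (2 - c)" by (intro mult_mono) auto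
  then show False using Bmat_eigenvalue[OF assms] by (simp add: algebra_simps)
qed

definition indep3 :: "real^3 \<Rightarrow> real^3 \<Rightarrow> real^3 \<Rightarrow> bool" where
  "indep3 x y z \<longleftrightarrow> (\<forall>a b c. a *\<^sub>R x + b *\<^sub>R y + c *\<^sub>R z = 0 \<longrightarrow> a = 0 \<and> b = 0 \<and> c = 0)"

definition comb3 :: "real^3 \<Rightarrow> real^3 \<Rightarrow> real^3 \<Rightarrow> real^3 \<Rightarrow> real^3" where
  "comb3 x y z w = w$1 *\<^sub>R x + w$2 *\<^sub>R y + w$3 *\<^sub>R z"

lemma linear_comb3: "linear (comb3 x y z)"
  unfolding comb3_def by (rule linearI) (simp_all add: algebra_simps)

lemma comb3_mk3 [simp]: "comb3 x y z (mk3 a b c) = a *\<^sub>R x + b *\<^sub>R y + c *\<^sub>R z"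
  by (simp add: comb3_def)

lemma inj_comb3:
  assumes "indep3 x y z"
  shows "inj (comb3 x y z)"
  unfolding linear_injective_0[OF linear_comb3]
proof (intro allI impI)
  fix w assume "comb3 x y z w = 0"
  then have "w$1 = 0 \<and> w$2 = 0 \<and> w$3 = 0"
    using assms unfolding indep3_def comb3_def by blast
  then show "w = 0"
    by (simp add: vec_eq_iff forall_3)
qed

lemma indep3_spans:
  assumes "indep3 x y z"
  obtains a b c where "v = a *\<^sub>R x + b *\<^sub>R y + c *\<^sub>R z"
proof -
  have "surj (comb3 x y z)"
    using linear_injective_imp_surjective[OF linear_comb3 inj_comb3[OF assms]] by simp
  then obtain w where "v = comb3 x y z w" by blast
  then show ?thesis using that unfolding comb3_def by blast
qed

lemma indep3_coeff_bound:
  assumes "indep3 x y z"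
  obtains m where "m > 0"
    and "\<And>a b c. m * \<bar>a\<bar> \<le> norm (a *\<^sub>R x + b *\<^sub>R y + c *\<^sub>R z)"
    and "\<And>a b c. m * \<bar>b\<bar> \<le> norm (a *\<^sub>R x + b *\<^sub>R y + c *\<^sub>R z)"
    and "\<And>a b c. m * \<bar>c\<bar> \<le> norm (a *\<^sub>R x + b *\<^sub>R y + c *\<^sub>R z)"
proof -
  have "bounded_linear (comb3 x y z)"
    using linear_comb3 linear_conv_bounded_linear by blast
  moreover have "\<forall>w\<in>UNIV. comb3 x y z w = 0 \<longrightarrow> w = 0"
    using inj_comb3[OF assms] linear_injective_0[OF linear_comb3] by blast
  ultimately obtain m where m: "m > 0" "\<And>w. m * norm w \<le> norm (comb3 x y z w)"
    using injective_imp_isometric[of UNIV "comb3 x y z"] by auto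
  have "m * \<bar>mk3 a b c $ i\<bar> \<le> norm (a *\<^sub>R x + b *\<^sub>R y + c *\<^sub>R z)" for a b c i
  proof -
    have "m * \<bar>mk3 a b c $ i\<bar> \<le> m * norm (mk3 a b c)"
      using m(1) by (simp add: component_le_norm_cart)
    also have "\<dots> \<le> norm (a *\<^sub>R x + b *\<^sub>R y + c *\<^sub>R z)"
      using m(2)[of "mk3 a b c"] by simp
    finally show ?thesis .
  qed
  from this[of _ _ _ 1] this[of _ _ _ 2] this[of _ _ _ 3] show ?thesis
    using that m(1) by simp
qed

lemma indep3_linear_extension:
  fixes u v w :: "real^3"
  assumes "indep3 x y z"
  obtains L where "linear L" "L x = u" "L y = v" "L z = w"
proof -
  obtain g where g: "linear g" "g \<circ> comb3 x y z = id"
    using linear_injective_left_inverse[OF linear_comb3 inj_comb3[OF assms]] by blast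
  have g_comb3: "g (comb3 x y z t) = t" for t
    using g(2) by (metis comp_apply id_apply)
  have "g x = mk3 1 0 0" "g y = mk3 0 1 0" "g z = mk3 0 0 1"
    using g_comb3[of "mk3 1 0 0"] g_comb3[of "mk3 0 1 0"] g_comb3[of "mk3 0 0 1"] by simp_all
  moreover have "linear (comb3 u v w \<circ> g)"
    by (intro linear_compose linear_comb3 g(1))
  ultimately show ?thesis
    using that[of "comb3 u v w \<circ> g"] by simp
qed

lemma indep3_linear_eq:
  assumes "indep3 x y z" "linear L" "linear L'" "L x = L' x" "L y = L' y" "L z = L' z"
  shows "L = L'"
proof
  fix v
  obtain a b c where "v = a *\<^sub>R x + b *\<^sub>R y + c *\<^sub>R z"
    using indep3_spans[OF assms(1)] by blast
  then show "L v = L' v"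
    using assms by (simp add: linear_add linear_scale)
qed

lemma indep3_eigenvectors:
  assumes C: "linear C" and e: "C x = a *\<^sub>R x" "C y = b *\<^sub>R y" "C z = c *\<^sub>R z"
    and nz: "x \<noteq> 0" "y \<noteq> 0" "z \<noteq> 0" and d: "a \<noteq> b" "a \<noteq> c" "b \<noteq> c"
  shows "indep3 x y z"
  unfolding indep3_def
proof (intro allI impI)
  have C_comb: "C (\<alpha> *\<^sub>R x + \<beta> *\<^sub>R y + \<gamma> *\<^sub>R z) = (\<alpha> * a) *\<^sub>R x + (\<beta> * b) *\<^sub>R y + (\<gamma> * c) *\<^sub>R z"
    for \<alpha> \<beta> \<gamma> by (simp add: linear_add[OF C] linear_scale[OF C] e)
  fix \<alpha> \<beta> \<gamma> assume h0: "\<alpha> *\<^sub>R x + \<beta> *\<^sub>R y + \<gamma> *\<^sub>R z = 0"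
  have h1: "(\<alpha> * a) *\<^sub>R x + (\<beta> * b) *\<^sub>R y + (\<gamma> * c) *\<^sub>R z = 0"
    using arg_cong[OF h0, of C] C_comb linear_0[OF C] by simp
  \<comment> \<open>\<open>C - c\<close> kills the \<open>z\<close>-component, then \<open>C - b\<close> the \<open>y\<close>-component\<close>
  have h2: "(\<alpha> * (a - c)) *\<^sub>R x + (\<beta> * (b - c)) *\<^sub>R y = 0"
  proof -
    have "(\<alpha> * a) *\<^sub>R x + (\<beta> * b) *\<^sub>R y + (\<gamma> * c) *\<^sub>R z - c *\<^sub>R (\<alpha> *\<^sub>R x + \<beta> *\<^sub>R y + \<gamma> *\<^sub>R z) = 0"
      using h0 h1 by simp
    then show ?thesis by (simp add: algebra_simps)
  qed
  have h3: "(\<alpha> * (a - c) * a) *\<^sub>R x + (\<beta> * (b - c) * b) *\<^sub>R y = 0"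
    using arg_cong[OF h2, of C] e
    by (simp add: linear_add[OF C] linear_scale[OF C] linear_0[OF C] mult.assoc)
  have "(\<alpha> * (a - c) * (a - b)) *\<^sub>R x = 0"
  proof -
    have "(\<alpha> * (a - c) * a) *\<^sub>R x + (\<beta> * (b - c) * b) *\<^sub>R y
        - b *\<^sub>R ((\<alpha> * (a - c)) *\<^sub>R x + (\<beta> * (b - c)) *\<^sub>R y) = 0"
      using h2 h3 by simp
    then show ?thesis by (simp add: algebra_simps)
  qed
  then have "\<alpha> = 0" using nz d by simp
  with h2 have "\<beta> = 0" using nz d by simp
  with h0 \<open>\<alpha> = 0\<close> show "\<alpha> = 0 \<and> \<beta> = 0 \<and> \<gamma> = 0" using nz by simp
qed

section \<open>Cocycles that are constant in the right-invariant frame\<close>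

definition constant_cocycle :: "(real^3 \<Rightarrow> real^3) \<Rightarrow> (real^3 \<Rightarrow> real^3 \<Rightarrow> real^3)
    \<Rightarrow> (real^3 \<Rightarrow> real^3) \<Rightarrow> bool" where
  "constant_cocycle g M C \<longleftrightarrow> linear C \<and> (\<forall>p. M p = from_id (g p) \<circ> C \<circ> to_id p)"

lemma cocn_constant_cocycle:
  assumes "constant_cocycle g M C"
  shows "cocn g M n p = from_id ((g ^^ n) p) \<circ> (C ^^ n) \<circ> to_id p"
  using assms by (induction n) (auto simp: constant_cocycle_def fun_eq_iff)

lemma linear_funpow:
  fixes C :: "'a::real_vector \<Rightarrow> 'a"
  assumes "linear C"
  shows "linear (C ^^ n)"
proof (induction n)
  case 0
  show ?case by (simp add: linear_iff)
next
  case (Suc n)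
  show ?case
    unfolding funpow.simps(2) by (rule linear_compose[OF Suc assms])
qed

lemma funpow_eigenvector:
  "linear C \<Longrightarrow> C e = k *\<^sub>R e \<Longrightarrow> (C ^^ n) (t *\<^sub>R e) = (t * k ^ n) *\<^sub>R e"
  by (induction n) (simp_all add: linear_scale)

lemma linear_constant_cocycle: "constant_cocycle g M C \<Longrightarrow> linear (M p)"
  unfolding constant_cocycle_def by (metis linear_compose linear_to_id linear_from_id)

lemma hnorm_cocn_eigenline:
  assumes M: "constant_cocycle g M C" and e: "C e = k *\<^sub>R e" and v: "v \<in> span {from_id p e}"
  shows "hnorm ((g ^^ n) p) (cocn g M n p v) = \<bar>k\<bar> ^ n * hnorm p v"
proof -
  have C: "linear C"
    using M by (simp add: constant_cocycle_def)
  obtain t where "v = t *\<^sub>R from_id p e"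
    using v unfolding span_singleton by blast
  then have "to_id p v = t *\<^sub>R e"
    by (simp add: linear_scale[OF linear_to_id])
  then show ?thesis
    by (simp add: cocn_constant_cocycle[OF M] hnorm_eq_norm_to_id funpow_eigenvector[OF C e]
        power_abs abs_mult)
qed

lemma cont_line_bundle_from_id: "e \<noteq> 0 \<Longrightarrow> cont_line_bundle (\<lambda>p. span {from_id p e})"
  unfolding cont_line_bundle_def
proof (intro allI exI conjI ballI)
  show "continuous_on UNIV (\<lambda>p. from_id p e)"
    unfolding from_id_def mk3_eq_axis_sum by (intro continuous_intros)
qed auto

lemma gam_equivariant_from_id: "gam_equivariant (\<lambda>p. span {from_id p e})"
  unfolding gam_equivariant_def
  by (simp add: span_linear_image[OF linear_DRt, symmetric] DRt_from_id)

lemma invariant_bundle_eigenline: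
  assumes M: "constant_cocycle g M C" and e: "C e = k *\<^sub>R e" and k: "k \<noteq> 0"
  shows "invariant_bundle g M (\<lambda>p. span {from_id p e})"
  unfolding invariant_bundle_def
proof
  fix p
  have "M p (from_id p e) = k *\<^sub>R from_id (g p) e"
    using M e by (simp add: constant_cocycle_def linear_scale[OF linear_from_id])
  moreover have "span {k *\<^sub>R from_id (g p) e} = span {from_id (g p) e}"
    using span_image_scale[of "{from_id (g p) e}" "\<lambda>_. k"] k by simp
  ultimately show "M p ` span {from_id p e} = span {from_id (g p) e}"
    by (simp add: span_linear_image[OF linear_constant_cocycle[OF M], symmetric])
qed

lemma dominated_eigenlines:
  assumes M: "constant_cocycle g M C"
    and e: "C e = k *\<^sub>R e" "C e' = k' *\<^sub>R e'" and k: "0 < \<bar>k\<bar>" "\<bar>k\<bar> < \<bar>k'\<bar>"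
  shows "dominated g M (\<lambda>p. span {from_id p e}) (\<lambda>p. span {from_id p e'})"
  unfolding dominated_def
proof (rule exI[of _ 1], rule exI[of _ "\<bar>k\<bar> / \<bar>k'\<bar>"], intro conjI allI impI)
  show "0 < \<bar>k\<bar> / \<bar>k'\<bar>" "\<bar>k\<bar> / \<bar>k'\<bar> < 1"
    using k by auto
  have "k' \<noteq> 0"
    using k by auto
  fix p n u w assume "u \<in> span {from_id p e}" "w \<in> span {from_id p e'}"
  then show "hnorm ((g ^^ n) p) (cocn g M n p u) * hnorm p w
      \<le> 1 * (\<bar>k\<bar> / \<bar>k'\<bar>) ^ n * hnorm ((g ^^ n) p) (cocn g M n p w) * hnorm p u"
    using \<open>k' \<noteq> 0\<close> by (simp add: hnorm_cocn_eigenline[OF M e(1)] hnorm_cocn_eigenline[OF M e(2)]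
        power_divide)
qed simp

lemma span_eigenlines_UNIV:
  assumes "indep3 e1 e2 e3"
  shows "span (span {from_id p e1} \<union> span {from_id p e2} \<union> span {from_id p e3}) = UNIV"
proof -
  let ?S = "span {from_id p e1} \<union> span {from_id p e2} \<union> span {from_id p e3}"
  have "v \<in> span ?S" for v
  proof -
    obtain a b c where "to_id p v = a *\<^sub>R e1 + b *\<^sub>R e2 + c *\<^sub>R e3"
      using indep3_spans[OF assms] by blast
    then have "v = a *\<^sub>R from_id p e1 + b *\<^sub>R from_id p e2 + c *\<^sub>R from_id p e3"
      by (metis from_id_to_id linear_add[OF linear_from_id] linear_scale[OF linear_from_id])
    moreover have "from_id p e1 \<in> span ?S" "from_id p e2 \<in> span ?S" "from_id p e3 \<in> span ?S"
      by (auto intro: span_base)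
    ultimately show ?thesis
      by (simp add: span_add span_scale)
  qed
  then show ?thesis by auto
qed

lemma partially_hyperbolic_constant_cocycle:
  assumes M: "constant_cocycle g M C"
    and e: "C e1 = k1 *\<^sub>R e1" "C e2 = k2 *\<^sub>R e2" "C e3 = k3 *\<^sub>R e3"
    and nz: "e1 \<noteq> 0" "e2 \<noteq> 0" "e3 \<noteq> 0"
    and k: "0 < \<bar>k1\<bar>" "\<bar>k1\<bar> < 1" "\<bar>k1\<bar> < \<bar>k2\<bar>" "\<bar>k2\<bar> < \<bar>k3\<bar>" "1 < \<bar>k3\<bar>"
  shows "partially_hyperbolic g M
    (\<lambda>p. span {from_id p e1}) (\<lambda>p. span {from_id p e2}) (\<lambda>p. span {from_id p e3})"
proof -
  have "linear C"
    using M by (simp add: constant_cocycle_def)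
  then have "indep3 e1 e2 e3"
    using k by (intro indep3_eigenvectors[OF _ e nz]) auto
  moreover have "unif_contracted g M (\<lambda>p. span {from_id p e1})"
    unfolding unif_contracted_def
    by (rule exI[of _ 1], rule exI[of _ "\<bar>k1\<bar>"])
      (use k in \<open>auto simp: hnorm_cocn_eigenline[OF M e(1)]\<close>)
  moreover have "unif_expanded g M (\<lambda>p. span {from_id p e3})"
    unfolding unif_expanded_def
    by (rule exI[of _ 1], rule exI[of _ "\<bar>k3\<bar>"])
      (use k in \<open>auto simp: hnorm_cocn_eigenline[OF M e(3)]\<close>)
  ultimately show ?thesis
    unfolding partially_hyperbolic_def
    using M e nz k cont_line_bundle_from_id gam_equivariant_from_id
      invariant_bundle_eigenline dominated_eigenlines span_eigenlines_UNIV
    by (auto simp del: span_Un)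
qed

section \<open>Lyapunov exponents of constant cocycles\<close>

lemma tendsto_ln_geometric_div_n:
  assumes "c > 0" "r > 0"
  shows "(\<lambda>n. ln (c * r ^ n) / real n) \<longlonglongrightarrow> ln r"
proof (rule Lim_transform_eventually)
  show "(\<lambda>n. ln c / real n + ln r) \<longlonglongrightarrow> ln r"
    using tendsto_add[OF lim_const_over_n[of "ln c"] tendsto_const[of "ln r"]] by simp
  show "\<forall>\<^sub>F n in sequentially. ln c / real n + ln r = ln (c * r ^ n) / real n"
    using eventually_gt_at_top[of 0]
    by eventually_elim (use assms in \<open>simp add: ln_mult ln_realpow field_simps\<close>)
qed

lemma tendsto_ln_div_n_sandwich:
  assumes "A > 0" "r > 0" "\<And>n. A * r ^ n \<le> x n" "\<And>n. x n \<le> B * r ^ n"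
  shows "(\<lambda>n. ln (x n) / real n) \<longlonglongrightarrow> ln r"
proof (rule tendsto_sandwich[OF _ _ tendsto_ln_geometric_div_n tendsto_ln_geometric_div_n])
  have pos: "0 < A * r ^ n" for n
    using assms by simp
  show "\<forall>\<^sub>F n in sequentially. ln (A * r ^ n) / real n \<le> ln (x n) / real n"
    using pos assms(3) by (intro always_eventually allI divide_right_mono ln_mono) auto
  show "\<forall>\<^sub>F n in sequentially. ln (x n) / real n \<le> ln (B * r ^ n) / real n"
    using pos assms(3,4) by (intro always_eventually allI divide_right_mono ln_mono)
      (auto intro: less_le_trans)
  show "0 < B"
    using pos[of 0] assms(3,4)[of 0] by simp
qed (use assms in auto)

lemma norm_eigen_sum_le:
  fixes e1 e2 e3 :: "'a::real_normed_vector"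
  assumes "r \<ge> 0" "a \<noteq> 0 \<Longrightarrow> \<bar>k1\<bar> \<le> r" "b \<noteq> 0 \<Longrightarrow> \<bar>k2\<bar> \<le> r" "c \<noteq> 0 \<Longrightarrow> \<bar>k3\<bar> \<le> r"
  shows "norm ((a * k1 ^ n) *\<^sub>R e1 + (b * k2 ^ n) *\<^sub>R e2 + (c * k3 ^ n) *\<^sub>R e3)
     \<le> (\<bar>a\<bar> * norm e1 + \<bar>b\<bar> * norm e2 + \<bar>c\<bar> * norm e3) * r ^ n"
proof -
  have term_le: "norm ((t * k ^ n) *\<^sub>R e) \<le> \<bar>t\<bar> * norm e * r ^ n"
    if "t \<noteq> 0 \<Longrightarrow> \<bar>k\<bar> \<le> r" for t k and e :: 'a
  proof (cases "t = 0")
    case False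
    then have "\<bar>k\<bar> ^ n \<le> r ^ n"
      using that by (simp add: power_mono)
    then have "\<bar>t\<bar> * norm e * \<bar>k\<bar> ^ n \<le> \<bar>t\<bar> * norm e * r ^ n"
      by (simp add: mult_left_mono)
    then show ?thesis
      by (simp add: abs_mult power_abs mult_ac)
  qed simp
  have "norm ((a * k1 ^ n) *\<^sub>R e1 + (b * k2 ^ n) *\<^sub>R e2 + (c * k3 ^ n) *\<^sub>R e3)
     \<le> norm ((a * k1 ^ n) *\<^sub>R e1) + norm ((b * k2 ^ n) *\<^sub>R e2) + norm ((c * k3 ^ n) *\<^sub>R e3)"
    by (meson add_mono norm_triangle_ineq order_trans order_refl)
  also have "\<dots> \<le> \<bar>a\<bar> * norm e1 * r ^ n + \<bar>b\<bar> * norm e2 * r ^ n + \<bar>c\<bar> * norm e3 * r ^ n"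
    by (intro add_mono term_le assms)
  finally show ?thesis
    by (simp add: algebra_simps)
qed

lemma eigen_combination_growth:
  assumes indep: "indep3 e1 e2 e3"
    and k: "0 < \<bar>k1\<bar>" "\<bar>k1\<bar> < \<bar>k2\<bar>" "\<bar>k2\<bar> < \<bar>k3\<bar>"
    and abc: "a \<noteq> 0 \<or> b \<noteq> 0 \<or> c \<noteq> 0"
  obtains r A B where "r \<in> {\<bar>k1\<bar>, \<bar>k2\<bar>, \<bar>k3\<bar>}" "A > 0"
    "\<And>n. A * r ^ n \<le> norm ((a * k1 ^ n) *\<^sub>R e1 + (b * k2 ^ n) *\<^sub>R e2 + (c * k3 ^ n) *\<^sub>R e3)"
    "\<And>n. norm ((a * k1 ^ n) *\<^sub>R e1 + (b * k2 ^ n) *\<^sub>R e2 + (c * k3 ^ n) *\<^sub>R e3) \<le> B * r ^ n"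
proof -
  let ?x = "\<lambda>n. norm ((a * k1 ^ n) *\<^sub>R e1 + (b * k2 ^ n) *\<^sub>R e2 + (c * k3 ^ n) *\<^sub>R e3)"
  obtain m where m: "m > 0"
    and coeff: "\<And>a b c. m * \<bar>a\<bar> \<le> norm (a *\<^sub>R e1 + b *\<^sub>R e2 + c *\<^sub>R e3)"
      "\<And>a b c. m * \<bar>b\<bar> \<le> norm (a *\<^sub>R e1 + b *\<^sub>R e2 + c *\<^sub>R e3)"
      "\<And>a b c. m * \<bar>c\<bar> \<le> norm (a *\<^sub>R e1 + b *\<^sub>R e2 + c *\<^sub>R e3)"
    using indep3_coeff_bound[OF indep] by blast
  have lower: "m * \<bar>a\<bar> * \<bar>k1\<bar> ^ n \<le> ?x n" "m * \<bar>b\<bar> * \<bar>k2\<bar> ^ n \<le> ?x n"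
    "m * \<bar>c\<bar> * \<bar>k3\<bar> ^ n \<le> ?x n" for n
    using coeff[where a = "a * k1 ^ n" and b = "b * k2 ^ n" and c = "c * k3 ^ n"]
    by (simp_all add: abs_mult power_abs mult.assoc)
  have upper: "?x n \<le> (\<bar>a\<bar> * norm e1 + \<bar>b\<bar> * norm e2 + \<bar>c\<bar> * norm e3) * r ^ n"
    if "r \<ge> 0" "a \<noteq> 0 \<Longrightarrow> \<bar>k1\<bar> \<le> r" "b \<noteq> 0 \<Longrightarrow> \<bar>k2\<bar> \<le> r" "c \<noteq> 0 \<Longrightarrow> \<bar>k3\<bar> \<le> r"
    for n r
    using that by (rule norm_eigen_sum_le)
  \<comment> \<open>the rate is that of the eigenvector of largest modulus with non-zero coefficient\<close>
  consider "c \<noteq> 0" | "c = 0" "b \<noteq> 0" | "c = 0" "b = 0" "a \<noteq> 0"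
    using abc by blast
  then show ?thesis
  proof cases
    case 1
    show ?thesis
      by (rule that[of "\<bar>k3\<bar>" "m * \<bar>c\<bar>"]; (rule lower(3) upper)?)
        (use 1 m k in auto)
  next
    case 2
    show ?thesis
      by (rule that[of "\<bar>k2\<bar>" "m * \<bar>b\<bar>"]; (rule lower(2) upper)?)
        (use 2 m k in auto)
  next
    case 3
    show ?thesis
      by (rule that[of "\<bar>k1\<bar>" "m * \<bar>a\<bar>"]; (rule lower(1) upper)?)
        (use 3 m k in auto)
  qed
qed

lemma nonuniformly_hyperbolic_constant_cocycle:
  assumes M: "constant_cocycle g M C"
    and e: "C e1 = k1 *\<^sub>R e1" "C e2 = k2 *\<^sub>R e2" "C e3 = k3 *\<^sub>R e3"
    and nz: "e1 \<noteq> 0" "e2 \<noteq> 0" "e3 \<noteq> 0"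
    and k: "0 < \<bar>k1\<bar>" "\<bar>k1\<bar> < \<bar>k2\<bar>" "\<bar>k2\<bar> < \<bar>k3\<bar>" "\<bar>k1\<bar> \<noteq> 1" "\<bar>k2\<bar> \<noteq> 1" "\<bar>k3\<bar> \<noteq> 1"
  shows "nonuniformly_hyperbolic g M"
  unfolding nonuniformly_hyperbolic_def
proof (rule AE_I2, intro allI impI)
  have C: "linear C"
    using M by (simp add: constant_cocycle_def)
  have indep: "indep3 e1 e2 e3"
    using k by (intro indep3_eigenvectors[OF C e nz]) auto
  fix p v assume "v \<noteq> (0::real^3)"
  obtain a b c where abc: "to_id p v = a *\<^sub>R e1 + b *\<^sub>R e2 + c *\<^sub>R e3"
    using indep3_spans[OF indep] by blast
  have "a \<noteq> 0 \<or> b \<noteq> 0 \<or> c \<noteq> 0"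
    using \<open>v \<noteq> 0\<close> abc by (metis from_id_to_id from_id_eq_0_iff add_0 scaleR_zero_left)
  then obtain r A B where r: "r \<in> {\<bar>k1\<bar>, \<bar>k2\<bar>, \<bar>k3\<bar>}" and "A > 0"
    and bounds: "\<And>n. A * r ^ n \<le> norm ((a * k1 ^ n) *\<^sub>R e1 + (b * k2 ^ n) *\<^sub>R e2 + (c * k3 ^ n) *\<^sub>R e3)"
      "\<And>n. norm ((a * k1 ^ n) *\<^sub>R e1 + (b * k2 ^ n) *\<^sub>R e2 + (c * k3 ^ n) *\<^sub>R e3) \<le> B * r ^ n"
    using eigen_combination_growth[OF indep k(1-3)] by blast
  have hnorm_eq: "hnorm ((g ^^ n) p) (cocn g M n p v)
      = norm ((a * k1 ^ n) *\<^sub>R e1 + (b * k2 ^ n) *\<^sub>R e2 + (c * k3 ^ n) *\<^sub>R e3)" for n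
    using linear_funpow[OF C, of n]
    by (simp add: cocn_constant_cocycle[OF M] hnorm_eq_norm_to_id abc linear_add
        funpow_eigenvector[OF C e(1)] funpow_eigenvector[OF C e(2)] funpow_eigenvector[OF C e(3)])
  have "r > 0" "r \<noteq> 1"
    using r k by auto
  have "(\<lambda>n. ln (hnorm ((g ^^ n) p) (cocn g M n p v)) / real n) \<longlonglongrightarrow> ln r"
    unfolding hnorm_eq by (rule tendsto_ln_div_n_sandwich[OF \<open>A > 0\<close> \<open>r > 0\<close> bounds])
  then show "\<exists>L. L \<noteq> 0 \<and>
      ((\<lambda>n. ln (hnorm ((g ^^ n) p) (cocn g M n p v)) / real n) \<longlongrightarrow> L) sequentially"
    using \<open>r > 0\<close> \<open>r \<noteq> 1\<close> by (intro exI[of _ "ln r"]) auto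
qed

section \<open>Rotating the centre-unstable plane\<close>

definition expanding_angles :: "real \<Rightarrow> real set" where
  "expanding_angles \<mu> = {\<theta>. 0 < \<theta> \<and> \<theta> < pi / 2 \<and> 4 * \<mu> < ((1 + \<mu>) * cos \<theta>)\<^sup>2}"

lemma open_expanding_angles: "open (expanding_angles \<mu>)"
  unfolding expanding_angles_def by (intro open_Collect_conj open_Collect_less continuous_intros)

lemma expanding_angles_subset: "expanding_angles \<mu> \<subseteq> {0..2 * pi}"
  unfolding expanding_angles_def using pi_gt_zero by auto

lemma expanding_angles_nonempty:
  assumes "\<mu> > 1"
  shows "expanding_angles \<mu> \<noteq> {}"
proof -
  let ?J = "{\<theta>::real. 4 * \<mu> < ((1 + \<mu>) * cos \<theta>)\<^sup>2}"
  have "open ?J"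
    by (intro open_Collect_less continuous_intros)
  moreover have "0 \<in> ?J"
  proof -
    have "(1 + \<mu>)\<^sup>2 - 4 * \<mu> = (\<mu> - 1)\<^sup>2"
      by (simp add: power2_eq_square algebra_simps)
    moreover have "(\<mu> - 1)\<^sup>2 > 0"
      using assms by simp
    ultimately have "4 * \<mu> < (1 + \<mu>)\<^sup>2"
      by linarith
    then show ?thesis
      by simp
  qed
  ultimately obtain \<epsilon> where "\<epsilon> > 0" "ball 0 \<epsilon> \<subseteq> ?J"
    by (meson open_contains_ball)
  moreover define \<theta> where "\<theta> = min (\<epsilon> / 2) (pi / 4)"
  ultimately have "0 < \<theta>" "\<theta> < pi / 2" "\<theta> \<in> ?J"
    using pi_gt_zero by (auto simp: \<theta>_def min_def subset_iff dist_real_def)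
  then show ?thesis
    unfolding expanding_angles_def by blast
qed

lemma quadratic_roots_gt_one:
  fixes T \<mu> :: real
  assumes "4 * \<mu> < T\<^sup>2" "T < 1 + \<mu>" "\<mu> > 1" "T > 0"
  obtains l1 l2 where "1 < l2" "l2 < l1" "l1\<^sup>2 - T * l1 + \<mu> = 0" "l2\<^sup>2 - T * l2 + \<mu> = 0"
proof -
  define r where "r = sqrt (T\<^sup>2 - 4 * \<mu>)"
  have r: "r > 0" "r\<^sup>2 = T\<^sup>2 - 4 * \<mu>"
    using assms(1) by (simp_all add: r_def)
  have "T > 2"
  proof (rule ccontr)
    assume "\<not> T > 2"
    then have "T\<^sup>2 \<le> 2\<^sup>2"
      using assms(4) by (intro power_mono) auto
    then show False
      using assms(1,3) by simp
  qed
  moreover have "r\<^sup>2 < (T - 2)\<^sup>2"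
    using r(2) assms(2) by (simp add: power2_eq_square algebra_simps)
  ultimately have "r < T - 2"
    by (intro power_less_imp_less_base[of r 2]) auto
  show ?thesis
  proof (rule that[of "(T - r) / 2" "(T + r) / 2"])
    show "1 < (T - r) / 2" "(T - r) / 2 < (T + r) / 2"
      using \<open>r < T - 2\<close> r(1) by simp_all
    show "((T + r) / 2)\<^sup>2 - T * ((T + r) / 2) + \<mu> = 0"
      "((T - r) / 2)\<^sup>2 - T * ((T - r) / 2) + \<mu> = 0"
      using r(2) by (simp_all add: power2_eq_square field_simps)
  qed
qed

lemma rotation_block_eigenvector:
  fixes Q Z :: "'a::real_vector"
  assumes A: "linear A" "A Q = \<mu> *\<^sub>R Q" "A Z = Z"
    and R: "linear R" "R Q = c *\<^sub>R Q + s *\<^sub>R Z" "R Z = (- s) *\<^sub>R Q + c *\<^sub>R Z"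
    and sc: "s\<^sup>2 + c\<^sup>2 = 1" and l: "l\<^sup>2 - (1 + \<mu>) * c * l + \<mu> = 0"
  shows "A (R ((l - c) *\<^sub>R Q + s *\<^sub>R Z)) = l *\<^sub>R ((l - c) *\<^sub>R Q + s *\<^sub>R Z)"
proof -
  have "A (R ((l - c) *\<^sub>R Q + s *\<^sub>R Z))
      = (l - c) *\<^sub>R (c *\<^sub>R \<mu> *\<^sub>R Q + s *\<^sub>R Z) + s *\<^sub>R ((- s) *\<^sub>R \<mu> *\<^sub>R Q + c *\<^sub>R Z)"
    by (simp only: linear_add[OF R(1)] linear_scale[OF R(1)] R(2,3)
        linear_add[OF A(1)] linear_scale[OF A(1)] A(2,3))
  also have "\<dots> = ((l - c) * c * \<mu> - s * s * \<mu>) *\<^sub>R Q + (l * s) *\<^sub>R Z"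
    by (simp add: algebra_simps)
  also have "(l - c) * c * \<mu> - s * s * \<mu> = l * (l - c)"
    using sc l by algebra
  finally show ?thesis
    by (simp add: algebra_simps)
qed

lemma Rot_eq_conj:
  assumes indep: "indep3 (lift2 s) (lift2 q) (axis 3 1)"
    and R: "linear R" "R (lift2 s) = lift2 s"
      "R (lift2 q) = cos \<theta> *\<^sub>R lift2 q + sin \<theta> *\<^sub>R axis 3 1"
      "R (axis 3 1) = (- sin \<theta>) *\<^sub>R lift2 q + cos \<theta> *\<^sub>R axis 3 1"
  shows "Rot \<theta> q s p = from_id p \<circ> R \<circ> to_id p"
proof -
  define P where "P L \<longleftrightarrow> linear L \<and> L (es s p) = es s p \<and>
      L (v2 q p) = cos \<theta> *\<^sub>R v2 q p + sin \<theta> *\<^sub>R v1 p \<and>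
      L (v1 p) = (- sin \<theta>) *\<^sub>R v2 q p + cos \<theta> *\<^sub>R v1 p" for L
  have "P (from_id p \<circ> R \<circ> to_id p)"
    unfolding P_def using R
    by (simp add: linear_compose linear_to_id linear_from_id es_eq v1_eq v2_eq
        linear_add[OF linear_from_id] linear_diff[OF linear_from_id] linear_scale[OF linear_from_id])
  then have PRot: "P (Rot \<theta> q s p)"
    unfolding Rot_def P_def[symmetric] by (rule someI[of P])
  have conj: "to_id p \<circ> Rot \<theta> q s p \<circ> from_id p = R"
  proof (rule indep3_linear_eq[OF indep])
    show "linear (to_id p \<circ> Rot \<theta> q s p \<circ> from_id p)"
      using PRot by (simp add: P_def linear_compose linear_to_id linear_from_id)
  qed (use PRot R in \<open>simp_all add: P_def es_eq v1_eq v2_eq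
        linear_add[OF linear_to_id] linear_diff[OF linear_to_id] linear_scale[OF linear_to_id]\<close>)
  show ?thesis
  proof
    fix v
    have "to_id p (Rot \<theta> q s p v) = R (to_id p v)"
      using fun_cong[OF conj, of "to_id p v"] by simp
    then show "Rot \<theta> q s p v = (from_id p \<circ> R \<circ> to_id p) v"
      by (metis comp_apply from_id_to_id)
  qed
qed

lemma expanding_angle_eigenvalues:
  assumes "\<theta> \<in> expanding_angles \<mu>" "\<mu> > 1"
  obtains l1 l2 where "1 < l2" "l2 < l1"
    "l1\<^sup>2 - (1 + \<mu>) * cos \<theta> * l1 + \<mu> = 0" "l2\<^sup>2 - (1 + \<mu>) * cos \<theta> * l2 + \<mu> = 0"
proof -
  have \<theta>: "0 < \<theta>" "\<theta> < pi / 2" "4 * \<mu> < ((1 + \<mu>) * cos \<theta>)\<^sup>2"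
    using assms(1) by (simp_all add: expanding_angles_def)
  then have "0 < cos \<theta>" "cos \<theta> < 1"
    using cos_monotone_0_pi[of 0 \<theta>] by (simp_all add: cos_gt_zero)
  then have "(1 + \<mu>) * cos \<theta> < 1 + \<mu>" "0 < (1 + \<mu>) * cos \<theta>"
    using assms(2) by simp_all
  then show ?thesis
    using that quadratic_roots_gt_one[OF \<theta>(3) _ assms(2)] by blast
qed

lemma Ftheta_constant_cocycle:
  assumes "indep3 (lift2 s) (lift2 q) (axis 3 1)"
  obtains R where "linear R" "R (lift2 s) = lift2 s"
    "R (lift2 q) = cos \<theta> *\<^sub>R lift2 q + sin \<theta> *\<^sub>R axis 3 1"
    "R (axis 3 1) = (- sin \<theta>) *\<^sub>R lift2 q + cos \<theta> *\<^sub>R axis 3 1"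
    "constant_cocycle Phi (Ftheta \<theta> q s) (Bext \<circ> R)"
proof -
  obtain R where R: "linear R" "R (lift2 s) = lift2 s"
    "R (lift2 q) = cos \<theta> *\<^sub>R lift2 q + sin \<theta> *\<^sub>R axis 3 1"
    "R (axis 3 1) = (- sin \<theta>) *\<^sub>R lift2 q + cos \<theta> *\<^sub>R axis 3 1"
    using indep3_linear_extension[OF assms] by blast
  moreover have "constant_cocycle Phi (Ftheta \<theta> q s) (Bext \<circ> R)"
    unfolding constant_cocycle_def Ftheta_def using Rot_eq_conj[OF assms R]
    by (simp add: linear_compose linear_Bext R(1) Df_eq_conj fun_eq_iff)
  ultimately show ?thesis
    by (rule that)
qed

lemma Ftheta_hyperbolic:
  assumes q: "q \<noteq> 0" "Bmat *v q = \<mu> *s q" "\<mu> > 1"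
    and s: "s \<noteq> 0" "Bmat *v s = \<nu> *s s" "\<nu> < 1"
    and \<theta>: "\<theta> \<in> expanding_angles \<mu>"
  shows "(\<exists>Es Ec Eu. partially_hyperbolic Phi (Ftheta \<theta> q s) Es Ec Eu)
    \<and> nonuniformly_hyperbolic Phi (Ftheta \<theta> q s)"
proof -
  let ?S = "lift2 s" and ?Q = "lift2 q" and ?Z = "axis 3 1 :: real^3"
  let ?X = "\<lambda>l. (l - cos \<theta>) *\<^sub>R ?Q + sin \<theta> *\<^sub>R ?Z"
  have "\<nu> > 0"
    using Bmat_eigenvalue_pos[OF s(1,2)] .
  have BS: "Bext ?S = \<nu> *\<^sub>R ?S" and BQ: "Bext ?Q = \<mu> *\<^sub>R ?Q" and BZ: "Bext ?Z = ?Z"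
    using Bext_lift2[OF s(2)] Bext_lift2[OF q(2)] Bext_axis3 by simp_all
  have "indep3 ?S ?Q ?Z"
    using q s \<open>\<nu> > 0\<close> BZ by (intro indep3_eigenvectors[OF linear_Bext BS BQ]) auto
  then obtain R where R: "linear R" "R ?S = ?S" "R ?Q = cos \<theta> *\<^sub>R ?Q + sin \<theta> *\<^sub>R ?Z"
      "R ?Z = (- sin \<theta>) *\<^sub>R ?Q + cos \<theta> *\<^sub>R ?Z"
    and M: "constant_cocycle Phi (Ftheta \<theta> q s) (Bext \<circ> R)"
    by (rule Ftheta_constant_cocycle)
  obtain l1 l2 where l: "1 < l2" "l2 < l1" "l1\<^sup>2 - (1 + \<mu>) * cos \<theta> * l1 + \<mu> = 0"
      "l2\<^sup>2 - (1 + \<mu>) * cos \<theta> * l2 + \<mu> = 0"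
    using expanding_angle_eigenvalues[OF \<theta> q(3)] by blast
  have S: "(Bext \<circ> R) ?S = \<nu> *\<^sub>R ?S"
    using BS R(2) by simp
  have X: "(Bext \<circ> R) (?X l) = l *\<^sub>R ?X l" if "l\<^sup>2 - (1 + \<mu>) * cos \<theta> * l + \<mu> = 0" for l
    using rotation_block_eigenvector[OF linear_Bext BQ BZ R(1,3,4) sin_cos_squared_add that]
    by simp
  have X0: "?X l \<noteq> 0" for l
  proof -
    have "?X l $ 3 = sin \<theta>" "sin \<theta> > 0"
      using \<theta> by (simp_all add: lift2_def expanding_angles_def sin_gt_zero)
    then show ?thesis
      by (metis zero_index order_less_irrefl)
  qed
  have "partially_hyperbolic Phi (Ftheta \<theta> q s)
      (\<lambda>p. span {from_id p ?S}) (\<lambda>p. span {from_id p (?X l2)}) (\<lambda>p. span {from_id p (?X l1)})"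
    by (rule partially_hyperbolic_constant_cocycle[OF M S X[OF l(4)] X[OF l(3)] _ X0 X0])
      (use s \<open>\<nu> > 0\<close> l in auto)
  moreover have "nonuniformly_hyperbolic Phi (Ftheta \<theta> q s)"
    by (rule nonuniformly_hyperbolic_constant_cocycle[OF M S X[OF l(4)] X[OF l(3)] _ X0 X0])
      (use s \<open>\<nu> > 0\<close> l in auto)
  ultimately show ?thesis
    by blast
qed

theorem corollaryD:
  fixes q s :: "real^2" and \<mu> \<nu> :: real
  assumes "q \<noteq> 0" and "Bmat *v q = \<mu> *s q" and "\<mu> > 1"
      and "s \<noteq> 0" and "Bmat *v s = \<nu> *s s" and "\<nu> < 1"
  shows "partially_hyperbolic Phi Df (\<lambda>p. span {es s p}) (\<lambda>p. span {v1 p}) (\<lambda>p. span {v2 q p})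
    \<and> (\<forall>p g. g \<in> Gam \<longrightarrow> v1 (hmul p g) = DRt g p (v1 p) \<and> v2 q (hmul p g) = DRt g p (v2 q p))
    \<and> (\<exists>I. open I \<and> I \<noteq> {} \<and> I \<subseteq> {0..2*pi} \<and>
        (\<forall>\<theta>\<in>I. (\<exists>Es Ec Eu. partially_hyperbolic Phi (Ftheta \<theta> q s) Es Ec Eu)
                 \<and> nonuniformly_hyperbolic Phi (Ftheta \<theta> q s)))"
proof (intro conjI)
  have M: "constant_cocycle Phi Df Bext"
    by (simp add: constant_cocycle_def linear_Bext Df_eq_conj)
  have Z: "Bext (axis 3 1) = 1 *\<^sub>R axis 3 1"
    using Bext_axis3 by simp
  have "partially_hyperbolic Phi Df (\<lambda>p. span {from_id p (lift2 s)})
      (\<lambda>p. span {from_id p (axis 3 1)}) (\<lambda>p. span {from_id p (lift2 q)})"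
    using assms Bmat_eigenvalue_pos[OF assms(4,5)]
    by (intro partially_hyperbolic_constant_cocycle[OF M Bext_lift2[OF assms(5)] Z
          Bext_lift2[OF assms(2)]]) auto
  then show "partially_hyperbolic Phi Df
      (\<lambda>p. span {es s p}) (\<lambda>p. span {v1 p}) (\<lambda>p. span {v2 q p})"
    by (simp add: es_eq v1_eq v2_eq)
  show "\<forall>p g. g \<in> Gam \<longrightarrow> v1 (hmul p g) = DRt g p (v1 p) \<and> v2 q (hmul p g) = DRt g p (v2 q p)"
    by (simp add: v1_eq v2_eq DRt_from_id)
  show "\<exists>I. open I \<and> I \<noteq> {} \<and> I \<subseteq> {0..2*pi} \<and>
      (\<forall>\<theta>\<in>I. (\<exists>Es Ec Eu. partially_hyperbolic Phi (Ftheta \<theta> q s) Es Ec Eu)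
               \<and> nonuniformly_hyperbolic Phi (Ftheta \<theta> q s))"
    by (rule exI[of _ "expanding_angles \<mu>"])
      (use assms open_expanding_angles expanding_angles_nonempty expanding_angles_subset Ftheta_hyperbolic in auto)
qed

end
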